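(* Let $B$ be a positive integer and let $\Psi=\forall X\in\mathbb R^n.\exists Y\in\mathbb R^m.\,(|X|>B\lor\Phi_0(X,Y))$ be a $\Pi_{2,<}$-sentence (so $\Phi_0$ is a $\mathrm{QFF}_<$-formula). Then $\Psi$ is true over $\mathbb R$ if and only if the sentence $\exists C\in\mathbb R.\forall X\in\mathbb R^n.\exists Y\in\mathbb R^m.\,(|X|>B\lor(|Y|\le C\land\Phi_0(X,Y)))$ is true over $\mathbb R$.
   Context: $\mathcal L$ is the first-order language over the signature $\langle \mathbb Z,+,\times,<,\le\rangle$ with connectives $\land,\lor$, interpreted over $\mathbb R$. A $\mathrm{QFF}_<$-formula is a quantifier-free $\mathcal L$-formula not containing $\le$. A $\Pi_{2,<}$-sentence has the form $\forall X.\exists Y.\,\chi(X,Y)$ with $\chi$ a $\mathrm{QFF}_<$-formula. For $X=(x_1,\dots,x_n)$ and a term $c$, $|X|\le c$ abbreviates $\bigwedge_j(-c\le x_j\le c)$ and $|X|>c$ abbreviates $\bigvee_j(x_j>c\lor x_j<-c)$. *)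

theory Defs
  imports Complex_Main
begin

datatype tm = Const int | XV nat | YV nat | Add tm tm | Mul tm tm

datatype qff_lt = Lt tm tm | And qff_lt qff_lt | Or qff_lt qff_lt

fun eval_tm :: "(nat \<Rightarrow> real) \<Rightarrow> (nat \<Rightarrow> real) \<Rightarrow> tm \<Rightarrow> real" where
  "eval_tm X Y (Const k) = real_of_int k"
| "eval_tm X Y (XV i) = X i"
| "eval_tm X Y (YV j) = Y j"
| "eval_tm X Y (Add s t) = eval_tm X Y s + eval_tm X Y t"
| "eval_tm X Y (Mul s t) = eval_tm X Y s * eval_tm X Y t"

fun holds :: "(nat \<Rightarrow> real) \<Rightarrow> (nat \<Rightarrow> real) \<Rightarrow> qff_lt \<Rightarrow> bool" where
  "holds X Y (Lt s t) = (eval_tm X Y s < eval_tm X Y t)"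
| "holds X Y (And f g) = (holds X Y f \<and> holds X Y g)"
| "holds X Y (Or f g) = (holds X Y f \<or> holds X Y g)"

fun tm_ok :: "nat \<Rightarrow> nat \<Rightarrow> tm \<Rightarrow> bool" where
  "tm_ok n m (Const k) = True"
| "tm_ok n m (XV i) = (i < n)"
| "tm_ok n m (YV j) = (j < m)"
| "tm_ok n m (Add s t) = (tm_ok n m s \<and> tm_ok n m t)"
| "tm_ok n m (Mul s t) = (tm_ok n m s \<and> tm_ok n m t)"

fun fm_ok :: "nat \<Rightarrow> nat \<Rightarrow> qff_lt \<Rightarrow> bool" where
  "fm_ok n m (Lt s t) = (tm_ok n m s \<and> tm_ok n m t)"
| "fm_ok n m (And f g) = (fm_ok n m f \<and> fm_ok n m g)"
| "fm_ok n m (Or f g) = (fm_ok n m f \<and> fm_ok n m g)"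

definition abs_gt :: "nat \<Rightarrow> (nat \<Rightarrow> real) \<Rightarrow> real \<Rightarrow> bool" where
  "abs_gt n X c \<longleftrightarrow> (\<exists>j<n. X j > c \<or> X j < - c)"

definition abs_le :: "nat \<Rightarrow> (nat \<Rightarrow> real) \<Rightarrow> real \<Rightarrow> bool" where
  "abs_le n X c \<longleftrightarrow> (\<forall>j<n. - c \<le> X j \<and> X j \<le> c)"

end

theory Submission
  imports Defs "HOL-Analysis.Analysis"
begin

text \<open>Since \<open>\<Phi>0\<close> is built from strict inequalities by \<open>\<and>\<close> and \<open>\<or>\<close>, each set
  \<open>{X. \<Phi>0(X, Y)}\<close> is open. The box \<open>|X| \<le> B\<close> is compact, so finitely many witnesses
  \<open>Y\<close> already serve all \<open>X\<close> in it, and \<open>C\<close> can be taken as a bound for these finitely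
  many witnesses.\<close>

lemma eval_tm_cong:
  "tm_ok n m t \<Longrightarrow> (\<forall>i<n. X i = X' i) \<Longrightarrow> eval_tm X Y t = eval_tm X' Y t"
  by (induction t) auto

lemma holds_cong:
  "fm_ok n m f \<Longrightarrow> (\<forall>i<n. X i = X' i) \<Longrightarrow> holds X Y f = holds X' Y f"
  by (induction f) (auto simp: eval_tm_cong[of n m _ X X' Y])

lemma continuous_on_eval_tm: "continuous_on UNIV (\<lambda>X. eval_tm X Y t)"
  by (induction t) (auto intro!: continuous_intros)

lemma open_holds: "open {X. holds X Y f}"
proof (induction f)
  case (Lt s t)
  then show ?case
    using open_Collect_less[OF continuous_on_eval_tm continuous_on_eval_tm] by simp
qed (simp_all add: Collect_conj_eq Collect_disj_eq open_Int open_Un)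

lemma not_abs_gt_iff_abs_le: "\<not> abs_gt n X c \<longleftrightarrow> abs_le n X c"
  unfolding abs_gt_def abs_le_def by (meson not_le)

text \<open>Coordinates beyond \<open>n\<close> are pinned to \<open>0\<close>: in the product topology on
  \<open>nat \<Rightarrow> real\<close> the unrestricted box \<open>{X. abs_le n X c}\<close> is not compact.\<close>

lemma compact_abs_le_box:
  "compact {X :: nat \<Rightarrow> real. abs_le n X c \<and> (\<forall>j\<ge>n. X j = 0)}"
proof -
  define S where "S = (\<lambda>j. if j < n then {- c..c} else {0 :: real})"
  have "PiE UNIV S = {X. abs_le n X c \<and> (\<forall>j\<ge>n. X j = 0)}"
  proof (rule set_eqI)
    fix X :: "nat \<Rightarrow> real"
    have "X \<in> PiE UNIV S \<longleftrightarrow> (\<forall>j. X j \<in> S j)"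
      by (simp add: PiE_iff)
    also have "\<dots> \<longleftrightarrow> abs_le n X c \<and> (\<forall>j\<ge>n. X j = 0)"
      unfolding abs_le_def S_def by (metis atLeastAtMost_iff not_le singletonD singletonI)
    finally show "X \<in> PiE UNIV S \<longleftrightarrow> X \<in> {X. abs_le n X c \<and> (\<forall>j\<ge>n. X j = 0)}"
      by simp
  qed
  moreover have "compactin (product_topology (\<lambda>_. euclidean) UNIV) (PiE UNIV S)"
    by (subst compactin_PiE) (auto simp: S_def)
  ultimately show ?thesis
    by (simp add: euclidean_product_topology)
qed

lemma finite_abs_le_bound:
  assumes "finite W"
  obtains C where "\<And>Y. Y \<in> W \<Longrightarrow> abs_le m Y C"
proof
  fix Y assume "Y \<in> W"
  show "abs_le m Y (\<Sum>Y\<in>W. \<Sum>j<m. \<bar>Y j\<bar>)"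
    unfolding abs_le_def
  proof (intro allI impI)
    fix j assume "j < m"
    then have "\<bar>Y j\<bar> \<le> (\<Sum>j<m. \<bar>Y j\<bar>)"
      by (intro member_le_sum) auto
    also have "\<dots> \<le> (\<Sum>Y\<in>W. \<Sum>j<m. \<bar>Y j\<bar>)"
      using \<open>Y \<in> W\<close> assms
      by (intro member_le_sum[where f = "\<lambda>Y. \<Sum>j<m. \<bar>Y j\<bar>"]) (auto intro: sum_nonneg)
    finally show "- (\<Sum>Y\<in>W. \<Sum>j<m. \<bar>Y j\<bar>) \<le> Y j \<and> Y j \<le> (\<Sum>Y\<in>W. \<Sum>j<m. \<bar>Y j\<bar>)"
      by linarith
  qed
qed

lemma bounded_witnesses_on_compact:
  assumes "compact K" and "\<forall>X\<in>K. \<exists>Y. holds X Y f"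
  obtains C where "\<forall>X\<in>K. \<exists>Y. abs_le m Y C \<and> holds X Y f"
proof -
  have "K \<subseteq> (\<Union>Y\<in>UNIV. {X. holds X Y f})"
    using assms(2) by blast
  then obtain W where "finite W" and W: "K \<subseteq> (\<Union>Y\<in>W. {X. holds X Y f})"
    by (rule compactE_image[of K UNIV "\<lambda>Y. {X. holds X Y f}", OF assms(1) open_holds])
  obtain C where "\<And>Y. Y \<in> W \<Longrightarrow> abs_le m Y C"
    using finite_abs_le_bound[OF \<open>finite W\<close>] by blast
  with W show ?thesis
    using that by blast
qed

theorem mainTheorem6:
  fixes B n m :: nat and \<Phi>0 :: qff_lt
  assumes "B > 0" and "fm_ok n m \<Phi>0"
  shows "(\<forall>X. \<exists>Y. abs_gt n X (real B) \<or> holds X Y \<Phi>0) \<longleftrightarrow>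
         (\<exists>C::real. \<forall>X. \<exists>Y. abs_gt n X (real B) \<or> (abs_le m Y C \<and> holds X Y \<Phi>0))"
proof
  assume H: "\<forall>X. \<exists>Y. abs_gt n X (real B) \<or> holds X Y \<Phi>0"
  define K where "K = {X :: nat \<Rightarrow> real. abs_le n X (real B) \<and> (\<forall>j\<ge>n. X j = 0)}"
  have "\<forall>X\<in>K. \<exists>Y. holds X Y \<Phi>0"
    using H by (auto simp: K_def simp flip: not_abs_gt_iff_abs_le)
  then obtain C where C: "\<forall>X\<in>K. \<exists>Y. abs_le m Y C \<and> holds X Y \<Phi>0"
    using bounded_witnesses_on_compact[OF compact_abs_le_box[of n "real B", folded K_def]] by blast
  have "\<exists>Y. abs_le m Y C \<and> holds X Y \<Phi>0" if "abs_le n X (real B)" for X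
  proof -
    define X' where "X' = (\<lambda>j. if j < n then X j else 0)"
    have "X' \<in> K"
      using that by (simp add: K_def X'_def abs_le_def)
    moreover have "holds X Y \<Phi>0 = holds X' Y \<Phi>0" for Y
      by (rule holds_cong[OF assms(2)]) (simp add: X'_def)
    ultimately show ?thesis
      using C by blast
  qed
  then show "\<exists>C. \<forall>X. \<exists>Y. abs_gt n X (real B) \<or> (abs_le m Y C \<and> holds X Y \<Phi>0)"
    by (meson not_abs_gt_iff_abs_le)
qed blast

end
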